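(* Let $\mathbb{X}$ be a category with finite products. For pre-$\mathsf{D}$-sequences $f_\bullet:A\to B$ and $g_\bullet:B\to C$: (i) $\mathsf{T}(i_\bullet)=i_\bullet$ (with $i_\bullet$ on the left the identity of $A$ and on the right the identity of $A\times A$); (ii) $\mathsf{T}(f_\bullet\ast g_\bullet)=\mathsf{T}(f_\bullet)\ast\mathsf{T}(g_\bullet)$.
   Context: Composition in diagrammatic order. $\mathsf{P}(A)=A\times A$, $\mathsf{P}(f)=f\times f$. A pre-$\mathsf{D}$-sequence $f_\bullet:A\to B$ is $(f_n)_{n\ge0}$ with $f_n:\mathsf{P}^n(A)\to B$. Tangent $\mathsf{T}(f_\bullet):\mathsf{P}(A)\to\mathsf{P}(B)$, $\mathsf{T}(f_\bullet)_n=\langle\mathsf{P}^n(\pi_0)f_n,f_{n+1}\rangle$, with $\mathsf{T}^n$ its iterate. Identity $i_\bullet:A\to A$: $i_0=1_A$, $i_n=\pi_1\cdots\pi_1:\mathsf{P}^n(A)\to A$ ($n$ projections). Composition $(f_\bullet\ast g_\bullet)_n=\mathsf{T}^n(f_\bullet)_0\,g_n$. *)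

theory Defs
  imports Main
begin

text \<open>A category with (chosen) finite products, morphisms carrying their domain and
codomain. Composition is written in diagrammatic order: comp f g means "first f, then g".\<close>

record ('o, 'm) fpcat =
  Ob   :: "'o set"
  Mor  :: "'m set"
  dom  :: "'m \<Rightarrow> 'o"
  cod  :: "'m \<Rightarrow> 'o"
  comp :: "'m \<Rightarrow> 'm \<Rightarrow> 'm"
  idm  :: "'o \<Rightarrow> 'm"
  trm  :: "'o"
  bang :: "'o \<Rightarrow> 'm"
  prd  :: "'o \<Rightarrow> 'o \<Rightarrow> 'o"
  p0   :: "'o \<Rightarrow> 'o \<Rightarrow> 'm"
  p1   :: "'o \<Rightarrow> 'o \<Rightarrow> 'm"
  pair :: "'m \<Rightarrow> 'm \<Rightarrow> 'm"

definition hom :: "('o, 'm, 'x) fpcat_scheme \<Rightarrow> 'o \<Rightarrow> 'o \<Rightarrow> 'm set" where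
  "hom C A B = {f \<in> Mor C. dom C f = A \<and> cod C f = B}"

definition fp_category :: "('o, 'm, 'x) fpcat_scheme \<Rightarrow> bool" where
  "fp_category C \<longleftrightarrow>
     (\<forall>f \<in> Mor C. dom C f \<in> Ob C \<and> cod C f \<in> Ob C)
   \<and> (\<forall>A \<in> Ob C. idm C A \<in> hom C A A)
   \<and> (\<forall>A \<in> Ob C. \<forall>B \<in> Ob C. \<forall>D \<in> Ob C. \<forall>f \<in> hom C A B. \<forall>g \<in> hom C B D.
          comp C f g \<in> hom C A D)
   \<and> (\<forall>A \<in> Ob C. \<forall>B \<in> Ob C. \<forall>f \<in> hom C A B.
          comp C (idm C A) f = f \<and> comp C f (idm C B) = f)
   \<and> (\<forall>A \<in> Ob C. \<forall>B \<in> Ob C. \<forall>D \<in> Ob C. \<forall>E \<in> Ob C.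
        \<forall>f \<in> hom C A B. \<forall>g \<in> hom C B D. \<forall>h \<in> hom C D E.
          comp C (comp C f g) h = comp C f (comp C g h))
   \<and> trm C \<in> Ob C
   \<and> (\<forall>A \<in> Ob C. bang C A \<in> hom C A (trm C) \<and> (\<forall>f \<in> hom C A (trm C). f = bang C A))
   \<and> (\<forall>A \<in> Ob C. \<forall>B \<in> Ob C.
        prd C A B \<in> Ob C
      \<and> p0 C A B \<in> hom C (prd C A B) A
      \<and> p1 C A B \<in> hom C (prd C A B) B
      \<and> (\<forall>X \<in> Ob C. \<forall>f \<in> hom C X A. \<forall>g \<in> hom C X B.
           pair C f g \<in> hom C X (prd C A B)
         \<and> comp C (pair C f g) (p0 C A B) = f
         \<and> comp C (pair C f g) (p1 C A B) = g)
      \<and> (\<forall>X \<in> Ob C. \<forall>h \<in> hom C X (prd C A B).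
           pair C (comp C h (p0 C A B)) (comp C h (p1 C A B)) = h))"

definition PO :: "('o, 'm, 'x) fpcat_scheme \<Rightarrow> 'o \<Rightarrow> 'o" where
  "PO C A = prd C A A"

definition PM :: "('o, 'm, 'x) fpcat_scheme \<Rightarrow> 'm \<Rightarrow> 'm" where
  "PM C f = pair C (comp C (p0 C (dom C f) (dom C f)) f) (comp C (p1 C (dom C f) (dom C f)) f)"

primrec POn :: "('o, 'm, 'x) fpcat_scheme \<Rightarrow> nat \<Rightarrow> 'o \<Rightarrow> 'o" where
  "POn C 0 A = A"
| "POn C (Suc n) A = PO C (POn C n A)"

primrec PMn :: "('o, 'm, 'x) fpcat_scheme \<Rightarrow> nat \<Rightarrow> 'm \<Rightarrow> 'm" where
  "PMn C 0 f = f"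
| "PMn C (Suc n) f = PM C (PMn C n f)"

definition preD :: "('o, 'm, 'x) fpcat_scheme \<Rightarrow> 'o \<Rightarrow> 'o \<Rightarrow> (nat \<Rightarrow> 'm) \<Rightarrow> bool" where
  "preD C A B f \<longleftrightarrow> (\<forall>n. f n \<in> hom C (POn C n A) B)"

definition Tseq :: "('o, 'm, 'x) fpcat_scheme \<Rightarrow> 'o \<Rightarrow> (nat \<Rightarrow> 'm) \<Rightarrow> nat \<Rightarrow> 'm" where
  "Tseq C A f n = pair C (comp C (PMn C n (p0 C A A)) (f n)) (f (Suc n))"

primrec Tn :: "('o, 'm, 'x) fpcat_scheme \<Rightarrow> nat \<Rightarrow> 'o \<Rightarrow> (nat \<Rightarrow> 'm) \<Rightarrow> nat \<Rightarrow> 'm" where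
  "Tn C 0 A f = f"
| "Tn C (Suc k) A f = Tseq C (POn C k A) (Tn C k A f)"

primrec idseq :: "('o, 'm, 'x) fpcat_scheme \<Rightarrow> 'o \<Rightarrow> nat \<Rightarrow> 'm" where
  "idseq C A 0 = idm C A"
| "idseq C A (Suc n) = comp C (p1 C (POn C n A) (POn C n A)) (idseq C A n)"

definition seqcomp :: "('o, 'm, 'x) fpcat_scheme \<Rightarrow> 'o \<Rightarrow> (nat \<Rightarrow> 'm) \<Rightarrow> (nat \<Rightarrow> 'm) \<Rightarrow> nat \<Rightarrow> 'm" where
  "seqcomp C A f g n = comp C (Tn C n A f 0) (g n)"

end

theory Submission
  imports Defs
begin

text \<open>For the identity, i is natural (P^n(h) ; i_n = i_n ; h) and i_(n+1) = i_n ; \<pi>1 at A x A, so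
T(i)_n = <i_n ; \<pi>0, i_n ; \<pi>1> = i_n. For composition, the key fact is the naturality
square T^(n+1)(f)_0 ; P^n(\<pi>0) = P^n(\<pi>0) ; T^n(f)_0, obtained by induction on n
because one application of T turns a naturality square between pre-D-sequences into
another one; both components of T(f * g)_n then agree with those of T^(n+1)(f)_0 ; T(g)_n.\<close>

lemma POn_PO: "POn C n (PO C X) = POn C (Suc n) X"
  by (induction n) auto

lemma PMn_PM: "PMn C n (PM C h) = PM C (PMn C n h)"
  by (induction n) auto

lemma Tn_Tseq: "Tn C n (PO C A) (Tseq C A f) = Tn C (Suc n) A f"
  by (induction n) (simp_all add: POn_PO)

locale finite_product_category =
  fixes C :: "('o, 'm, 'x) fpcat_scheme"
  assumes cat: "fp_category C"
begin

lemma hom_ob: "f \<in> hom C X Y \<Longrightarrow> X \<in> Ob C \<and> Y \<in> Ob C"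
  using cat unfolding fp_category_def hom_def by auto

lemma hom_dom: "f \<in> hom C X Y \<Longrightarrow> dom C f = X"
  by (simp add: hom_def)

lemma comp_hom: "f \<in> hom C X Y \<Longrightarrow> g \<in> hom C Y Z \<Longrightarrow> comp C f g \<in> hom C X Z"
  using cat hom_ob[of f X Y] hom_ob[of g Y Z]
    unfolding fp_category_def by auto

lemma id_hom: "X \<in> Ob C \<Longrightarrow> idm C X \<in> hom C X X"
  using cat
    unfolding fp_category_def by auto

lemma id_left: "f \<in> hom C X Y \<Longrightarrow> comp C (idm C X) f = f"
  using cat hom_ob[of f X Y]
    unfolding fp_category_def by auto

lemma id_right: "f \<in> hom C X Y \<Longrightarrow> comp C f (idm C Y) = f"
  using cat hom_ob[of f X Y]
    unfolding fp_category_def by auto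

lemma comp_assoc: "f \<in> hom C X Y \<Longrightarrow> g \<in> hom C Y Z \<Longrightarrow> h \<in> hom C Z W \<Longrightarrow>
    comp C (comp C f g) h = comp C f (comp C g h)"
  using cat hom_ob[of f X Y] hom_ob[of g Y Z] hom_ob[of h Z W]
    unfolding fp_category_def by auto

lemma prd_ob: "A \<in> Ob C \<Longrightarrow> B \<in> Ob C \<Longrightarrow> prd C A B \<in> Ob C"
  using cat
    unfolding fp_category_def by auto

lemma p0_hom: "A \<in> Ob C \<Longrightarrow> B \<in> Ob C \<Longrightarrow> p0 C A B \<in> hom C (prd C A B) A"
  using cat
    unfolding fp_category_def by auto

lemma p1_hom: "A \<in> Ob C \<Longrightarrow> B \<in> Ob C \<Longrightarrow> p1 C A B \<in> hom C (prd C A B) B"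
  using cat
    unfolding fp_category_def by auto

lemma pair_hom: "a \<in> hom C X A \<Longrightarrow> b \<in> hom C X B \<Longrightarrow> pair C a b \<in> hom C X (prd C A B)"
  using cat hom_ob[of a X A] hom_ob[of b X B]
    unfolding fp_category_def by auto

lemma pair_p0: "a \<in> hom C X A \<Longrightarrow> b \<in> hom C X B \<Longrightarrow> comp C (pair C a b) (p0 C A B) = a"
  using cat hom_ob[of a X A] hom_ob[of b X B]
    unfolding fp_category_def by auto

lemma pair_p1: "a \<in> hom C X A \<Longrightarrow> b \<in> hom C X B \<Longrightarrow> comp C (pair C a b) (p1 C A B) = b"
  using cat hom_ob[of a X A] hom_ob[of b X B]
    unfolding fp_category_def by auto

lemma pair_eta: "A \<in> Ob C \<Longrightarrow> B \<in> Ob C \<Longrightarrow> h \<in> hom C X (prd C A B) \<Longrightarrow>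
    pair C (comp C h (p0 C A B)) (comp C h (p1 C A B)) = h"
  using cat hom_ob[of h X "prd C A B"]
    unfolding fp_category_def by auto

lemma comp_pair:
  assumes k: "k \<in> hom C W X" and a: "a \<in> hom C X A" and b: "b \<in> hom C X B"
  shows "comp C k (pair C a b) = pair C (comp C k a) (comp C k b)"
proof -
  have A: "A \<in> Ob C" and B: "B \<in> Ob C" using hom_ob a b by auto
  have kab: "comp C k (pair C a b) \<in> hom C W (prd C A B)"
    using comp_hom[OF k pair_hom[OF a b]] .
  have "comp C (comp C k (pair C a b)) (p0 C A B) = comp C k a"
    using comp_assoc[OF k pair_hom[OF a b] p0_hom[OF A B]] pair_p0[OF a b] by simp
  moreover have "comp C (comp C k (pair C a b)) (p1 C A B) = comp C k b"
    using comp_assoc[OF k pair_hom[OF a b] p1_hom[OF A B]] pair_p1[OF a b] by simp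
  ultimately show ?thesis using pair_eta[OF A B kab] by simp
qed

lemma PO_ob: "X \<in> Ob C \<Longrightarrow> PO C X \<in> Ob C"
  by (simp add: PO_def prd_ob)

lemma POn_ob: "X \<in> Ob C \<Longrightarrow> POn C n X \<in> Ob C"
  by (induction n) (auto simp: PO_ob)

lemma p0_PO: "X \<in> Ob C \<Longrightarrow> p0 C X X \<in> hom C (PO C X) X"
  using p0_hom by (simp add: PO_def)

lemma p1_PO: "X \<in> Ob C \<Longrightarrow> p1 C X X \<in> hom C (PO C X) X"
  using p1_hom by (simp add: PO_def)

lemma PM_hom:
  assumes h: "h \<in> hom C X Y"
  shows "PM C h \<in> hom C (PO C X) (PO C Y)"
proof -
  have X: "X \<in> Ob C" using hom_ob h by auto
  show ?thesis
    unfolding PM_def hom_dom[OF h] PO_def[of C Y]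
    using pair_hom comp_hom[OF p0_PO[OF X] h] comp_hom[OF p1_PO[OF X] h] by blast
qed

lemma PM_p0: "h \<in> hom C X Y \<Longrightarrow> comp C (PM C h) (p0 C Y Y) = comp C (p0 C X X) h"
  unfolding PM_def by (metis pair_p0 comp_hom hom_dom hom_ob p0_PO p1_PO)

lemma PM_p1: "h \<in> hom C X Y \<Longrightarrow> comp C (PM C h) (p1 C Y Y) = comp C (p1 C X X) h"
  unfolding PM_def by (metis pair_p1 comp_hom hom_dom hom_ob p0_PO p1_PO)

lemma pair_comp_PM:
  assumes a: "a \<in> hom C Z Y" and b: "b \<in> hom C Z Y" and r: "r \<in> hom C Y W"
  shows "comp C (pair C a b) (PM C r) = pair C (comp C a r) (comp C b r)"
proof -
  have Y: "Y \<in> Ob C" using hom_ob r by auto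
  have ab: "pair C a b \<in> hom C Z (PO C Y)" using pair_hom[OF a b] by (simp add: PO_def)
  have "comp C (pair C a b) (PM C r)
      = pair C (comp C (pair C a b) (comp C (p0 C Y Y) r))
               (comp C (pair C a b) (comp C (p1 C Y Y) r))"
    unfolding PM_def hom_dom[OF r]
    by (rule comp_pair[OF ab comp_hom[OF p0_PO[OF Y] r] comp_hom[OF p1_PO[OF Y] r]])
  also have "\<dots> = pair C (comp C a r) (comp C b r)"
    using comp_assoc[OF ab p0_PO[OF Y] r] comp_assoc[OF ab p1_PO[OF Y] r]
      pair_p0[OF a b] pair_p1[OF a b] by (simp add: PO_def)
  finally show ?thesis .
qed

lemma PM_comp:
  assumes h: "h \<in> hom C X Y" and k: "k \<in> hom C Y Z"
  shows "PM C (comp C h k) = comp C (PM C h) (PM C k)"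
proof -
  have X: "X \<in> Ob C" using hom_ob h by auto
  have "comp C (PM C h) (PM C k)
      = pair C (comp C (comp C (p0 C X X) h) k) (comp C (comp C (p1 C X X) h) k)"
    unfolding PM_def[of C h] hom_dom[OF h]
    by (rule pair_comp_PM[OF comp_hom[OF p0_PO[OF X] h] comp_hom[OF p1_PO[OF X] h] k])
  also have "\<dots> = PM C (comp C h k)"
    unfolding PM_def hom_dom[OF comp_hom[OF h k]]
    using comp_assoc[OF p0_PO[OF X] h k] comp_assoc[OF p1_PO[OF X] h k] by simp
  finally show ?thesis by simp
qed

lemma PMn_hom: "h \<in> hom C X Y \<Longrightarrow> PMn C n h \<in> hom C (POn C n X) (POn C n Y)"
  by (induction n) (auto simp: PM_hom)

lemma PMn_comp: "h \<in> hom C X Y \<Longrightarrow> k \<in> hom C Y Z \<Longrightarrow>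
    PMn C n (comp C h k) = comp C (PMn C n h) (PMn C n k)"
  by (induction n) (simp_all add: PM_comp[OF PMn_hom PMn_hom])

lemma idseq_hom: "X \<in> Ob C \<Longrightarrow> idseq C X n \<in> hom C (POn C n X) X"
  by (induction n) (auto simp: id_hom intro: comp_hom p1_PO POn_ob)

lemma idseq_natural:
  assumes h: "h \<in> hom C X Y"
  shows "comp C (PMn C n h) (idseq C Y n) = comp C (idseq C X n) h"
proof (induction n)
  case 0
  then show ?case using id_left id_right h by simp
next
  case (Suc n)
  have X: "X \<in> Ob C" and Y: "Y \<in> Ob C" using hom_ob h by auto
  have hn: "PMn C n h \<in> hom C (POn C n X) (POn C n Y)" using PMn_hom h by blast
  note p1X = p1_PO[OF POn_ob[OF X]] and p1Y = p1_PO[OF POn_ob[OF Y]]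
  have "comp C (PMn C (Suc n) h) (idseq C Y (Suc n))
      = comp C (comp C (PM C (PMn C n h)) (p1 C (POn C n Y) (POn C n Y))) (idseq C Y n)"
    using comp_assoc[OF PM_hom[OF hn] p1Y idseq_hom[OF Y]] by simp
  also have "\<dots> = comp C (p1 C (POn C n X) (POn C n X)) (comp C (PMn C n h) (idseq C Y n))"
    using PM_p1[OF hn] comp_assoc[OF p1X hn idseq_hom[OF Y]] by simp
  also have "\<dots> = comp C (idseq C X (Suc n)) h"
    using Suc comp_assoc[OF p1X idseq_hom[OF X] h] by simp
  finally show ?case .
qed

lemma idseq_Suc_p1:
  assumes X: "X \<in> Ob C"
  shows "idseq C X (Suc n) = comp C (idseq C (PO C X) n) (p1 C X X)"
proof (induction n)
  case 0
  then show ?case using id_right id_left p1_PO[OF X] by simp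
next
  case (Suc n)
  have p1: "p1 C (POn C (Suc n) X) (POn C (Suc n) X)
      \<in> hom C (POn C (Suc (Suc n)) X) (POn C (Suc n) X)"
    using p1_PO[OF POn_ob[OF X, of "Suc n"]] by simp
  have i: "idseq C (PO C X) n \<in> hom C (POn C (Suc n) X) (PO C X)"
    using idseq_hom[OF PO_ob[OF X], of n] by (simp add: POn_PO)
  show ?case
    using Suc comp_assoc[OF p1 i p1_PO[OF X]] by (simp add: POn_PO)
qed

lemma Tseq_idseq:
  assumes A: "A \<in> Ob C"
  shows "Tseq C A (idseq C A) = idseq C (PO C A)"
proof
  fix n
  have i: "idseq C (PO C A) n \<in> hom C (POn C n (PO C A)) (prd C A A)"
    using idseq_hom[OF PO_ob[OF A]] by (simp add: PO_def)
  have "Tseq C A (idseq C A) n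
      = pair C (comp C (idseq C (PO C A) n) (p0 C A A)) (comp C (idseq C (PO C A) n) (p1 C A A))"
    using idseq_natural[OF p0_PO[OF A]] idseq_Suc_p1[OF A] by (simp add: Tseq_def)
  also have "\<dots> = idseq C (PO C A) n" using pair_eta[OF A A i] .
  finally show "Tseq C A (idseq C A) n = idseq C (PO C A) n" .
qed

lemma preD_Suc: "preD C X Y h \<Longrightarrow> h (Suc n) \<in> hom C (POn C n (PO C X)) Y"
  unfolding preD_def POn_PO by blast

lemma Tseq_preD:
  assumes h: "preD C X Y h" and X: "X \<in> Ob C"
  shows "preD C (PO C X) (PO C Y) (Tseq C X h)"
  unfolding preD_def Tseq_def PO_def[of C Y]
  using h preD_Suc[OF h] PMn_hom[OF p0_PO[OF X]]
  by (auto simp: preD_def intro!: pair_hom comp_hom)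

lemma Tn_preD: "preD C A B f \<Longrightarrow> A \<in> Ob C \<Longrightarrow> preD C (POn C k A) (POn C k B) (Tn C k A f)"
  by (induction k) (auto intro: Tseq_preD POn_ob)

lemma Tseq_natural:
  assumes S: "preD C X' Y' S" and R: "preD C X Y R"
    and q: "q \<in> hom C X' X" and r: "r \<in> hom C Y' Y"
    and square: "\<And>m. comp C (S m) r = comp C (PMn C m q) (R m)"
  shows "comp C (Tseq C X' S m) (PM C r) = comp C (PMn C m (PM C q)) (Tseq C X R m)"
proof -
  have X': "X' \<in> Ob C" and X: "X \<in> Ob C" using hom_ob q by auto
  define \<pi>' where "\<pi>' = PMn C m (p0 C X' X')"
  define \<pi> where "\<pi> = PMn C m (p0 C X X)"
  have \<pi>': "\<pi>' \<in> hom C (POn C m (PO C X')) (POn C m X')"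
    unfolding \<pi>'_def using PMn_hom p0_PO X' by blast
  have \<pi>: "\<pi> \<in> hom C (POn C m (PO C X)) (POn C m X)"
    unfolding \<pi>_def using PMn_hom p0_PO X by blast
  have Sm: "S m \<in> hom C (POn C m X') Y'" and Rm: "R m \<in> hom C (POn C m X) Y"
    using S R by (simp_all add: preD_def)
  note Sm1 = preD_Suc[OF S, of m] and Rm1 = preD_Suc[OF R, of m]
  have qm: "PMn C m q \<in> hom C (POn C m X') (POn C m X)" using PMn_hom q by blast
  have Pq: "PMn C m (PM C q) \<in> hom C (POn C m (PO C X')) (POn C m (PO C X))"
    using PMn_hom PM_hom q by blast
  have \<pi>_q: "comp C \<pi>' (PMn C m q) = comp C (PMn C m (PM C q)) \<pi>"
    unfolding \<pi>'_def \<pi>_def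
    using PMn_comp[OF p0_PO[OF X'] q] PMn_comp[OF PM_hom[OF q] p0_PO[OF X]] PM_p0[OF q] by simp
  have "comp C (Tseq C X' S m) (PM C r)
      = pair C (comp C (comp C \<pi>' (S m)) r) (comp C (S (Suc m)) r)"
    unfolding Tseq_def \<pi>'_def[symmetric] by (rule pair_comp_PM[OF comp_hom[OF \<pi>' Sm] Sm1 r])
  also have "comp C (comp C \<pi>' (S m)) r = comp C (PMn C m (PM C q)) (comp C \<pi> (R m))"
    using comp_assoc[OF \<pi>' Sm r] square comp_assoc[OF \<pi>' qm Rm] \<pi>_q comp_assoc[OF Pq \<pi> Rm]
    by simp
  also have "comp C (S (Suc m)) r = comp C (PMn C m (PM C q)) (R (Suc m))"
    using square[of "Suc m"] by (simp add: PMn_PM)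
  also have "pair C (comp C (PMn C m (PM C q)) (comp C \<pi> (R m)))
                    (comp C (PMn C m (PM C q)) (R (Suc m)))
      = comp C (PMn C m (PM C q)) (Tseq C X R m)"
    unfolding Tseq_def \<pi>_def[symmetric] by (rule comp_pair[OF Pq comp_hom[OF \<pi> Rm] Rm1, symmetric])
  finally show ?thesis .
qed

lemma Tn_Tseq_natural:
  assumes f: "preD C A B f" and A: "A \<in> Ob C" and B: "B \<in> Ob C"
  shows "comp C (Tn C n (PO C A) (Tseq C A f) m) (PMn C n (p0 C B B))
       = comp C (PMn C m (PMn C n (p0 C A A))) (Tn C n A f m)"
proof (induction n arbitrary: m)
  case 0
  have "comp C (PMn C m (p0 C A A)) (f m) \<in> hom C (POn C m (PO C A)) B"
    using comp_hom[OF PMn_hom[OF p0_PO[OF A]]] f unfolding preD_def by blast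
  then show ?case using pair_p0 preD_Suc[OF f] by (simp add: Tseq_def)
next
  case (Suc n)
  show ?case
    using Tseq_natural[OF Tn_preD[OF Tseq_preD[OF f A] PO_ob[OF A]] Tn_preD[OF f A]
        PMn_hom[OF p0_PO[OF A]] PMn_hom[OF p0_PO[OF B]] Suc]
    by simp
qed

lemma Tseq_seqcomp:
  assumes A: "A \<in> Ob C" and B: "B \<in> Ob C" and f: "preD C A B f" and g: "preD C B D g"
  shows "Tseq C A (seqcomp C A f g) = seqcomp C (PO C A) (Tseq C A f) (Tseq C B g)"
proof
  fix n
  define F where "F = Tn C (Suc n) A f 0"
  define q where "q = PMn C n (p0 C A A)"
  define r where "r = PMn C n (p0 C B B)"
  have F: "F \<in> hom C (POn C (Suc n) A) (POn C (Suc n) B)"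
    using Tn_preD[OF f A, of "Suc n"] unfolding F_def preD_def by (metis POn.simps(1))
  have r: "r \<in> hom C (POn C (Suc n) B) (POn C n B)"
    using PMn_hom[OF p0_PO[OF B], of n] by (simp add: r_def POn_PO)
  have q: "q \<in> hom C (POn C (Suc n) A) (POn C n A)"
    using PMn_hom[OF p0_PO[OF A], of n] by (simp add: q_def POn_PO)
  have Fn: "Tn C n A f 0 \<in> hom C (POn C n A) (POn C n B)"
    using Tn_preD[OF f A, of n] unfolding preD_def by (metis POn.simps(1))
  have gn: "g n \<in> hom C (POn C n B) D" and gn1: "g (Suc n) \<in> hom C (POn C (Suc n) B) D"
    using g unfolding preD_def by blast+
  have square: "comp C F r = comp C q (Tn C n A f 0)"
    using Tn_Tseq_natural[OF f A B, of n 0] by (simp add: F_def r_def q_def Tn_Tseq)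
  have "seqcomp C (PO C A) (Tseq C A f) (Tseq C B g) n
      = comp C F (pair C (comp C r (g n)) (g (Suc n)))"
    by (simp add: seqcomp_def Tseq_def F_def r_def Tn_Tseq)
  also have "\<dots> = pair C (comp C F (comp C r (g n))) (comp C F (g (Suc n)))"
    by (rule comp_pair[OF F comp_hom[OF r gn] gn1])
  also have "comp C F (comp C r (g n)) = comp C q (comp C (Tn C n A f 0) (g n))"
    using comp_assoc[OF F r gn] square comp_assoc[OF q Fn gn] by simp
  also have "pair C (comp C q (comp C (Tn C n A f 0) (g n))) (comp C F (g (Suc n)))
      = Tseq C A (seqcomp C A f g) n"
    unfolding Tseq_def[of C A] seqcomp_def F_def q_def by (rule refl)
  finally show "Tseq C A (seqcomp C A f g) n = seqcomp C (PO C A) (Tseq C A f) (Tseq C B g) n"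
    by (rule sym)
qed

end

theorem lemma3p6:
  fixes C :: "('o, 'm) fpcat"
  assumes cat: "fp_category C"
    and obs: "A \<in> Ob C" "B \<in> Ob C" "D \<in> Ob C"
    and f: "preD C A B f" and g: "preD C B D g"
  shows "Tseq C A (idseq C A) = idseq C (PO C A)
         \<and> Tseq C A (seqcomp C A f g) = seqcomp C (PO C A) (Tseq C A f) (Tseq C B g)"
proof -
  interpret finite_product_category C by (rule finite_product_category.intro[OF cat])
  show ?thesis using Tseq_idseq[OF obs(1)] Tseq_seqcomp[OF obs(1,2) f g] by simp
qed

end
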